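(* Let $\Omega=(0,1)\times(0,1)\subset\mathbb{R}^2$ and let $h:[0,1]\to\mathbb{R}$ be a bounded function with $h(0)=0$, $h(x_1)>0$ for $x_1\in(0,1]$, $h\in C^1(0,1]$, and suppose there exist constants $C>0$ and $\theta\in(0,1)$ such that $$\sup_{x\in\Omega,\ 0<r\le d}\frac{\int_{B(x,r)\cap\Omega}h(x_1)^{-1}\,dx}{|B(x,r)\cap\Omega|^{\theta}}\le C,$$ where $d$ is the diameter of $\Omega$. Then $$H_0^1(\Omega)\subset\mathcal{H}_{h,0}^1(\Omega)\subset\mathcal{H}_h^1(\Omega)\cap W_0^{1,1}(\Omega).$$
   Context: $B(x,r)$ is the Euclidean ball with center $x$ and radius $r$, $|\cdot|$ is Lebesgue measure. $\mathcal{H}_h^1(\Omega)=\{u\in L^2(\Omega)\mid \partial_{x_1}u\in L^2(\Omega),\ \sqrt{h(x_1)}\,\partial_{x_2}u\in L^2(\Omega)\}$ (distributional derivatives), with norm $\|u\|_{\mathcal{H}_h^1(\Omega)}=\big(\|u\|_{L^2(\Omega)}^2+\|\partial_{x_1}u\|_{L^2(\Omega)}^2+\|\sqrt{h(x_1)}\partial_{x_2}u\|_{L^2(\Omega)}^2\big)^{1/2}$. $\mathcal{H}_{h,0}^1(\Omega)$ is the closure of $C_0^\infty(\Omega)$ in $\mathcal{H}_h^1(\Omega)$. *)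

theory Defs
  imports "HOL-Analysis.Analysis"
begin

text \<open>Points of R^2 are pairs (x1,x2) :: real \<times> real; the product norm is Euclidean,
  so ball x r is the Euclidean ball. Lebesgue measure is lebesgue on real \<times> real.\<close>

definition Omega :: "(real \<times> real) set" where
  "Omega = {0<..<1} \<times> {0<..<1}"

definition pd1 :: "(real \<times> real \<Rightarrow> real) \<Rightarrow> real \<times> real \<Rightarrow> real" where
  "pd1 f x = frechet_derivative f (at x) (1, 0)"

definition pd2 :: "(real \<times> real \<Rightarrow> real) \<Rightarrow> real \<times> real \<Rightarrow> real" where
  "pd2 f x = frechet_derivative f (at x) (0, 1)"

text \<open>C-infinity on R^2: differentiable everywhere, and so are all iterated partials.\<close>
coinductive smooth2 :: "(real \<times> real \<Rightarrow> real) \<Rightarrow> bool" where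
  "(\<forall>x. f differentiable (at x)) \<Longrightarrow> smooth2 (pd1 f) \<Longrightarrow> smooth2 (pd2 f) \<Longrightarrow> smooth2 f"

definition test_fun :: "(real \<times> real) set \<Rightarrow> (real \<times> real \<Rightarrow> real) \<Rightarrow> bool" where
  "test_fun U \<phi> \<longleftrightarrow> smooth2 \<phi> \<and> compact (closure {x. \<phi> x \<noteq> 0})
      \<and> closure {x. \<phi> x \<noteq> 0} \<subseteq> U"

definition Lp_on :: "real \<Rightarrow> (real \<times> real) set \<Rightarrow> (real \<times> real \<Rightarrow> real) \<Rightarrow> bool" where
  "Lp_on p U f \<longleftrightarrow> set_borel_measurable lebesgue U f
      \<and> set_integrable lebesgue U (\<lambda>x. \<bar>f x\<bar> powr p)"

definition loc_int :: "(real \<times> real) set \<Rightarrow> (real \<times> real \<Rightarrow> real) \<Rightarrow> bool" where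
  "loc_int U f \<longleftrightarrow> (\<forall>K. compact K \<and> K \<subseteq> U \<longrightarrow> set_integrable lebesgue K f)"

definition weak_pd :: "nat \<Rightarrow> (real \<times> real) set \<Rightarrow> (real \<times> real \<Rightarrow> real)
    \<Rightarrow> (real \<times> real \<Rightarrow> real) \<Rightarrow> bool" where
  "weak_pd i U u g \<longleftrightarrow> loc_int U u \<and> loc_int U g \<and>
     (\<forall>\<phi>. test_fun U \<phi> \<longrightarrow>
        (LINT x:U|lebesgue. u x * (if i = 1 then pd1 \<phi> x else pd2 \<phi> x))
          = - (LINT x:U|lebesgue. g x * \<phi> x))"

definition Hh1 :: "(real \<Rightarrow> real) \<Rightarrow> (real \<times> real \<Rightarrow> real) \<Rightarrow> bool" where
  "Hh1 h u \<longleftrightarrow> Lp_on 2 Omega u \<and>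
     (\<exists>g1 g2. weak_pd 1 Omega u g1 \<and> weak_pd 2 Omega u g2 \<and>
        Lp_on 2 Omega g1 \<and> Lp_on 2 Omega (\<lambda>x. sqrt (h (fst x)) * g2 x))"

text \<open>H^1_{h,0}(Omega): closure of C_0^infinity(Omega) in the H^1_h norm
  (the squared norm of u - phi_n tends to 0).\<close>
definition Hh10 :: "(real \<Rightarrow> real) \<Rightarrow> (real \<times> real \<Rightarrow> real) \<Rightarrow> bool" where
  "Hh10 h u \<longleftrightarrow> Hh1 h u \<and>
     (\<exists>g1 g2 \<phi>. weak_pd 1 Omega u g1 \<and> weak_pd 2 Omega u g2 \<and>
        Lp_on 2 Omega g1 \<and> Lp_on 2 Omega (\<lambda>x. sqrt (h (fst x)) * g2 x) \<and>
        (\<forall>n. test_fun Omega (\<phi> n)) \<and>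
        (\<lambda>n. (LINT x:Omega|lebesgue. (u x - \<phi> n x)^2)
            + (LINT x:Omega|lebesgue. (g1 x - pd1 (\<phi> n) x)^2)
            + (LINT x:Omega|lebesgue. h (fst x) * (g2 x - pd2 (\<phi> n) x)^2))
          \<longlonglongrightarrow> 0)"

definition H10 :: "(real \<times> real \<Rightarrow> real) \<Rightarrow> bool" where
  "H10 u \<longleftrightarrow> Hh10 (\<lambda>_. 1) u"

text \<open>W^{1,1}_0(Omega): closure of C_0^infinity(Omega) in W^{1,1}(Omega).\<close>
definition W110 :: "(real \<times> real \<Rightarrow> real) \<Rightarrow> bool" where
  "W110 u \<longleftrightarrow> Lp_on 1 Omega u \<and>
     (\<exists>g1 g2 \<phi>. weak_pd 1 Omega u g1 \<and> weak_pd 2 Omega u g2 \<and>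
        Lp_on 1 Omega g1 \<and> Lp_on 1 Omega g2 \<and>
        (\<forall>n. test_fun Omega (\<phi> n)) \<and>
        (\<lambda>n. (LINT x:Omega|lebesgue. \<bar>u x - \<phi> n x\<bar>)
            + (LINT x:Omega|lebesgue. \<bar>g1 x - pd1 (\<phi> n) x\<bar>)
            + (LINT x:Omega|lebesgue. \<bar>g2 x - pd2 (\<phi> n) x\<bar>))
          \<longlonglongrightarrow> 0)"

end

(* The weight h is bounded on Omega, so the H^1_h error of an approximation by test functions
   is at most max 1 (sup h) times its H^1 error; this gives H^1_0 \<subseteq> H^1_{h,0}.
   For the second inclusion, the growth condition for x = (1/2, 1/2) and r = diam Omega,
   where the ball covers Omega, shows that 1/h is integrable on Omega.  Then the weighted
   Cauchy-Schwarz inequality  \<integral>|f| \<le> (\<integral>1/h)^(1/2) (\<integral>h f^2)^(1/2)  turns convergence in the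
   H^1_h norm into convergence in W^{1,1}; for u and its x_1-derivative plain L^2 \<subseteq> L^1
   on the bounded set Omega suffices. *)

theory Submission
  imports Defs
begin

section \<open>Weighted integral inequalities\<close>

lemma weighted_Cauchy_Schwarz_nn_integral:
  fixes w f :: "'a \<Rightarrow> real"
  assumes [measurable]: "w \<in> borel_measurable M" "f \<in> borel_measurable M"
    and w_pos: "\<forall>x\<in>space M. 0 < w x"
  shows "(\<integral>\<^sup>+x. \<bar>f x\<bar> \<partial>M)\<^sup>2 \<le> (\<integral>\<^sup>+x. 1 / w x \<partial>M) * (\<integral>\<^sup>+x. w x * (f x)\<^sup>2 \<partial>M)"
proof -
  let ?F = "\<lambda>x. ennreal (1 / sqrt (w x))" and ?G = "\<lambda>x. ennreal (sqrt (w x) * \<bar>f x\<bar>)"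
  have "\<forall>x\<in>space M. ?F x * ?G x = \<bar>f x\<bar> \<and> ?F x ^ 2 = 1 / w x \<and> ?G x ^ 2 = w x * (f x)\<^sup>2"
    using w_pos by (auto simp: ennreal_mult' [symmetric] ennreal_power power_mult_distrib power_divide)
  then have "(\<integral>\<^sup>+x. ?F x * ?G x \<partial>M) = (\<integral>\<^sup>+x. \<bar>f x\<bar> \<partial>M)"
    and "(\<integral>\<^sup>+x. ?F x ^ 2 \<partial>M) = (\<integral>\<^sup>+x. 1 / w x \<partial>M)"
    and "(\<integral>\<^sup>+x. ?G x ^ 2 \<partial>M) = (\<integral>\<^sup>+x. w x * (f x)\<^sup>2 \<partial>M)"
    by (auto intro: nn_integral_cong)
  with Cauchy_Schwarz_nn_integral[of ?F M ?G] show ?thesis by simp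
qed

lemma weighted_Cauchy_Schwarz_integral:
  fixes w f :: "'a \<Rightarrow> real"
  assumes [measurable]: "w \<in> borel_measurable M" "f \<in> borel_measurable M"
    and w_pos: "\<forall>x\<in>space M. 0 < w x"
    and int_inv: "integrable M (\<lambda>x. 1 / w x)" and int_sq: "integrable M (\<lambda>x. w x * (f x)\<^sup>2)"
  shows "integrable M (\<lambda>x. \<bar>f x\<bar>)"
    and "(\<integral>x. \<bar>f x\<bar> \<partial>M) \<le> sqrt ((\<integral>x. 1 / w x \<partial>M) * (\<integral>x. w x * (f x)\<^sup>2 \<partial>M))"
proof -
  define I where "I = (\<integral>x. 1 / w x \<partial>M)"
  define J where "J = (\<integral>x. w x * (f x)\<^sup>2 \<partial>M)"
  have I_eq: "(\<integral>\<^sup>+x. 1 / w x \<partial>M) = I" and "I \<ge> 0"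
    unfolding I_def using int_inv w_pos
    by (auto intro!: nn_integral_eq_integral integral_nonneg_AE AE_I2 simp: less_imp_le)
  have J_eq: "(\<integral>\<^sup>+x. w x * (f x)\<^sup>2 \<partial>M) = J" and "J \<ge> 0"
    unfolding J_def using int_sq w_pos
    by (auto intro!: nn_integral_eq_integral integral_nonneg_AE AE_I2 simp: less_imp_le)
  have CS: "(\<integral>\<^sup>+x. \<bar>f x\<bar> \<partial>M)\<^sup>2 \<le> ennreal (I * J)"
    using weighted_Cauchy_Schwarz_nn_integral[of w M f] w_pos \<open>I \<ge> 0\<close>
    unfolding I_eq J_eq by (simp add: ennreal_mult')
  then have "(\<integral>\<^sup>+x. \<bar>f x\<bar> \<partial>M)\<^sup>2 < \<infinity>"
    using le_less_trans[OF CS ennreal_less_top] by simp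
  then show int_abs: "integrable M (\<lambda>x. \<bar>f x\<bar>)"
    by (intro integrableI_nonneg) (simp_all add: power_less_top_ennreal)
  have "ennreal ((\<integral>x. \<bar>f x\<bar> \<partial>M)\<^sup>2) \<le> ennreal (I * J)"
  proof -
    have "(\<integral>\<^sup>+x. \<bar>f x\<bar> \<partial>M) = (\<integral>x. \<bar>f x\<bar> \<partial>M)"
      using int_abs by (intro nn_integral_eq_integral) auto
    with CS show ?thesis by (simp add: ennreal_power)
  qed
  then show "(\<integral>x. \<bar>f x\<bar> \<partial>M) \<le> sqrt (I * J)"
    using \<open>I \<ge> 0\<close> \<open>J \<ge> 0\<close> by (intro real_le_rsqrt) simp
qed

lemma tendsto_integral_abs_zero_if_weighted_square:
  fixes w :: "'a \<Rightarrow> real" and f :: "nat \<Rightarrow> 'a \<Rightarrow> real"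
  assumes [measurable]: "w \<in> borel_measurable M" "\<And>n. f n \<in> borel_measurable M"
    and w_pos: "\<forall>x\<in>space M. 0 < w x" and int_inv: "integrable M (\<lambda>x. 1 / w x)"
    and int_sq: "\<And>n. integrable M (\<lambda>x. w x * (f n x)\<^sup>2)"
    and lim: "(\<lambda>n. \<integral>x. w x * (f n x)\<^sup>2 \<partial>M) \<longlonglongrightarrow> 0"
  shows "(\<lambda>n. \<integral>x. \<bar>f n x\<bar> \<partial>M) \<longlonglongrightarrow> 0"
proof (rule Lim_null_comparison)
  let ?I = "\<integral>x. 1 / w x \<partial>M"
  show "\<forall>\<^sub>F n in sequentially. norm (\<integral>x. \<bar>f n x\<bar> \<partial>M) \<le> sqrt (?I * (\<integral>x. w x * (f n x)\<^sup>2 \<partial>M))"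
    using weighted_Cauchy_Schwarz_integral(2)[OF _ _ w_pos int_inv int_sq] by simp
  show "(\<lambda>n. sqrt (?I * (\<integral>x. w x * (f n x)\<^sup>2 \<partial>M))) \<longlonglongrightarrow> 0"
    using tendsto_real_sqrt[OF tendsto_mult_right_zero[OF lim]] by simp
qed

lemma tendsto_zero_summands_nonneg:
  fixes a b c :: "nat \<Rightarrow> real"
  assumes "\<And>n. 0 \<le> a n" "\<And>n. 0 \<le> b n" "\<And>n. 0 \<le> c n"
    and lim: "(\<lambda>n. a n + b n + c n) \<longlonglongrightarrow> 0"
  shows "a \<longlonglongrightarrow> 0" "b \<longlonglongrightarrow> 0" "c \<longlonglongrightarrow> 0"
proof -
  show "a \<longlonglongrightarrow> 0"
    using assms(1-3) by (intro Lim_null_comparison[OF _ lim] always_eventually allI) simp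
  show "b \<longlonglongrightarrow> 0"
    using assms(1-3) by (intro Lim_null_comparison[OF _ lim] always_eventually allI) simp
  show "c \<longlonglongrightarrow> 0"
    using assms(1-3) by (intro Lim_null_comparison[OF _ lim] always_eventually allI) simp
qed

lemma tendsto_zero_add_dominated:
  fixes a c d :: "nat \<Rightarrow> real"
  assumes a: "\<And>n. 0 \<le> a n" and c: "\<And>n. 0 \<le> c n" and d: "\<And>n. 0 \<le> d n"
    and d_le: "\<And>n. d n \<le> M * c n" and lim: "(\<lambda>n. a n + c n) \<longlonglongrightarrow> 0"
  shows "(\<lambda>n. a n + d n) \<longlonglongrightarrow> 0"
proof (rule Lim_null_comparison)
  let ?K = "max 1 M"
  show "\<forall>\<^sub>F n in sequentially. norm (a n + d n) \<le> ?K * (a n + c n)"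
  proof (intro always_eventually allI)
    fix n
    have "a n \<le> ?K * a n"
      using mult_right_mono[of 1 ?K "a n"] a[of n] by simp
    moreover have "d n \<le> ?K * c n"
      using d_le[of n] mult_right_mono[of M ?K "c n"] c[of n] by simp
    ultimately show "norm (a n + d n) \<le> ?K * (a n + c n)"
      using a[of n] d[of n] by (simp add: distrib_left)
  qed
  show "(\<lambda>n. ?K * (a n + c n)) \<longlonglongrightarrow> 0"
    using lim by (rule tendsto_mult_right_zero)
qed

lemma integrable_bounded_weight_mult:
  fixes w f :: "'a \<Rightarrow> real"
  assumes [measurable]: "w \<in> borel_measurable M" "f \<in> borel_measurable M"
    and "\<forall>x\<in>space M. \<bar>w x\<bar> \<le> W" and "integrable M f"
  shows "integrable M (\<lambda>x. w x * f x)"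
proof (rule Bochner_Integration.integrable_bound)
  show "integrable M (\<lambda>x. W * f x)" using assms(4) by simp
  show "AE x in M. norm (w x * f x) \<le> norm (W * f x)"
    using assms(3) by (intro AE_I2) (auto simp: abs_mult intro!: mult_right_mono)
qed simp

lemma weighted_square_diff_le:
  fixes w W g p B :: real
  assumes "0 \<le> w" "w \<le> W" "\<bar>p\<bar> \<le> B"
  shows "w * (g - p)\<^sup>2 \<le> 2 * (w * g\<^sup>2) + 2 * W * B\<^sup>2"
proof -
  have "(g - p)\<^sup>2 \<le> 2 * g\<^sup>2 + 2 * p\<^sup>2"
    using zero_le_power2[of "g + p"] by (simp add: power2_diff power2_sum)
  then have "w * (g - p)\<^sup>2 \<le> w * (2 * g\<^sup>2 + 2 * p\<^sup>2)"
    using assms(1) by (rule mult_left_mono)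
  also have "\<dots> = 2 * (w * g\<^sup>2) + 2 * (w * p\<^sup>2)"
    by (simp add: algebra_simps)
  also have "w * p\<^sup>2 \<le> W * B\<^sup>2"
    using assms power_mono[OF assms(3) abs_ge_zero, of 2] by (intro mult_mono) auto
  finally show ?thesis by simp
qed

lemma (in finite_measure) integrable_weighted_square_diff:
  fixes w g p :: "'a \<Rightarrow> real"
  assumes [measurable]: "w \<in> borel_measurable M" "g \<in> borel_measurable M" "p \<in> borel_measurable M"
    and w_bounds: "\<forall>x\<in>space M. 0 \<le> w x \<and> w x \<le> W" and p_bound: "\<forall>x\<in>space M. \<bar>p x\<bar> \<le> B"
    and "integrable M (\<lambda>x. w x * (g x)\<^sup>2)"
  shows "integrable M (\<lambda>x. w x * (g x - p x)\<^sup>2)"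
proof (rule Bochner_Integration.integrable_bound)
  show "integrable M (\<lambda>x. 2 * (w x * (g x)\<^sup>2) + 2 * W * B\<^sup>2)"
    using assms(6) by simp
  show "AE x in M. norm (w x * (g x - p x)\<^sup>2) \<le> norm (2 * (w x * (g x)\<^sup>2) + 2 * W * B\<^sup>2)"
    using w_bounds p_bound weighted_square_diff_le
    by (intro AE_I2) (auto intro!: order_trans[OF _ abs_ge_self])
qed simp

lemma open_Omega: "open Omega"
  unfolding Omega_def by (simp add: open_Times)

lemma bounded_Omega: "bounded Omega"
  unfolding Omega_def by (simp add: bounded_Times)

lemma lmeasurable_Omega: "Omega \<in> lmeasurable"
  using lmeasurable_open[OF bounded_Omega open_Omega] .

lemma sets_lebesgue_Omega [measurable]: "Omega \<in> sets lebesgue"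
  using lmeasurable_Omega by (rule fmeasurableD)

interpretation Omega: finite_measure "lebesgue_on Omega"
  using finite_measure_lebesgue_on[OF lmeasurable_Omega] .

lemma set_integral_Omega:
  "(LINT x:Omega|lebesgue. f x) = (\<integral>x. f x \<partial>lebesgue_on Omega)" for f :: "real \<times> real \<Rightarrow> real"
  unfolding set_lebesgue_integral_def by (simp add: integral_restrict_space)

lemma Lp_on_2_Omega_iff:
  "Lp_on 2 Omega f \<longleftrightarrow> f \<in> borel_measurable (lebesgue_on Omega) \<and> integrable (lebesgue_on Omega) (\<lambda>x. (f x)\<^sup>2)"
  unfolding Lp_on_def set_borel_measurable_def set_integrable_def
  by (simp add: borel_measurable_restrict_space_iff integrable_restrict_space)

lemma Lp_on_1_Omega_iff: "Lp_on 1 Omega f \<longleftrightarrow> integrable (lebesgue_on Omega) f"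
proof -
  have "Lp_on 1 Omega f \<longleftrightarrow>
      f \<in> borel_measurable (lebesgue_on Omega) \<and> integrable (lebesgue_on Omega) (\<lambda>x. \<bar>f x\<bar>)"
    unfolding Lp_on_def set_borel_measurable_def set_integrable_def
    by (simp add: borel_measurable_restrict_space_iff integrable_restrict_space)
  then show ?thesis by (metis borel_measurable_integrable integrable_abs_iff)
qed

lemma fst_in_Omega: "x \<in> Omega \<Longrightarrow> fst x \<in> {0<..<1}"
  unfolding Omega_def by (auto simp: mem_Times_iff)

lemma centre_in_Omega: "(1/2, 1/2) \<in> Omega"
  by (simp add: Omega_def)

lemma diameter_Omega_pos: "0 < diameter Omega"
proof -
  have "(1/4, 1/4) \<in> Omega" by (simp add: Omega_def)
  then have "dist ((1/2, 1/2) :: real \<times> real) (1/4, 1/4) \<le> diameter Omega"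
    using centre_in_Omega by (intro diameter_bounded_bound bounded_Omega)
  moreover have "0 < dist ((1/2, 1/2) :: real \<times> real) (1/4, 1/4)"
    by (simp only: zero_less_dist_iff) simp
  ultimately show ?thesis by linarith
qed

lemma Omega_subset_ball_diameter: "Omega \<subseteq> ball (1/2, 1/2) (diameter Omega)"
proof
  fix y assume y: "y \<in> Omega"
  let ?c = "(1/2, 1/2) :: real \<times> real"
  have "(1, 1) - y \<in> Omega"
    using y unfolding Omega_def by (auto simp: mem_Times_iff)
  then have "dist y ((1, 1) - y) \<le> diameter Omega"
    using y by (intro diameter_bounded_bound bounded_Omega)
  moreover have "y - ((1, 1) - y) = 2 *\<^sub>R (y - ?c)"
    by (cases y) simp
  then have "dist y ((1, 1) - y) = 2 * dist ?c y"
    by (simp add: dist_norm norm_minus_commute)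
  ultimately have "dist ?c y < diameter Omega"
    using diameter_Omega_pos by linarith
  then show "y \<in> ball ?c (diameter Omega)" by simp
qed

lemma continuous_on_smooth2: "smooth2 f \<Longrightarrow> continuous_on UNIV f"
  by (erule smooth2.cases)
     (auto intro!: continuous_at_imp_continuous_on differentiable_imp_continuous_within)

lemma test_fun_continuous:
  assumes "test_fun U \<phi>"
  shows "continuous_on UNIV \<phi>" "continuous_on UNIV (pd1 \<phi>)" "continuous_on UNIV (pd2 \<phi>)"
proof -
  have "smooth2 \<phi>" using assms by (simp add: test_fun_def)
  then show "continuous_on UNIV \<phi>" "continuous_on UNIV (pd1 \<phi>)" "continuous_on UNIV (pd2 \<phi>)"
    by (auto elim: smooth2.cases intro: continuous_on_smooth2)
qed

lemma bounded_on_Omega_if_continuous: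
  fixes p :: "real \<times> real \<Rightarrow> real"
  assumes "continuous_on UNIV p"
  obtains B where "\<forall>x\<in>Omega. \<bar>p x\<bar> \<le> B"
proof -
  have "compact (p ` closure Omega)"
    using bounded_Omega assms by (intro compact_continuous_image) (auto intro: continuous_on_subset)
  then obtain B where "\<forall>y\<in>p ` closure Omega. norm y \<le> B"
    by (meson bounded_iff compact_imp_bounded)
  then show ?thesis using closure_subset that by fastforce
qed

lemma measurable_on_Omega_if_continuous:
  fixes p :: "real \<times> real \<Rightarrow> real"
  assumes "continuous_on UNIV p"
  shows "p \<in> borel_measurable (lebesgue_on Omega)"
  using assms by (intro continuous_imp_measurable_on_sets_lebesgue) (auto intro: continuous_on_subset)

lemma integrable_weighted_square_diff_continuous:
  fixes w g p :: "real \<times> real \<Rightarrow> real"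
  assumes "w \<in> borel_measurable (lebesgue_on Omega)" "g \<in> borel_measurable (lebesgue_on Omega)"
    and "\<forall>x\<in>Omega. 0 \<le> w x \<and> w x \<le> W" and "integrable (lebesgue_on Omega) (\<lambda>x. w x * (g x)\<^sup>2)"
    and "continuous_on UNIV p"
  shows "integrable (lebesgue_on Omega) (\<lambda>x. w x * (g x - p x)\<^sup>2)"
proof -
  obtain B where B: "\<forall>x\<in>Omega. \<bar>p x\<bar> \<le> B"
    using bounded_on_Omega_if_continuous[OF assms(5)] .
  show ?thesis
    by (rule Omega.integrable_weighted_square_diff[OF assms(1,2)
          measurable_on_Omega_if_continuous[OF assms(5)] _ _ assms(4)])
       (use assms(3) B in auto)
qed

lemma integral_weighted_square_diff_le:
  fixes w g p :: "real \<times> real \<Rightarrow> real"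
  assumes [measurable]: "w \<in> borel_measurable (lebesgue_on Omega)" "g \<in> borel_measurable (lebesgue_on Omega)"
    and w_bounds: "\<forall>x\<in>Omega. 0 \<le> w x \<and> w x \<le> W" and g_sq: "integrable (lebesgue_on Omega) (\<lambda>x. (g x)\<^sup>2)"
    and cont: "continuous_on UNIV p"
  shows "(\<integral>x. w x * (g x - p x)\<^sup>2 \<partial>lebesgue_on Omega) \<le> W * (\<integral>x. (g x - p x)\<^sup>2 \<partial>lebesgue_on Omega)"
proof -
  have [measurable]: "p \<in> borel_measurable (lebesgue_on Omega)"
    using cont by (rule measurable_on_Omega_if_continuous)
  have int: "integrable (lebesgue_on Omega) (\<lambda>x. (g x - p x)\<^sup>2)"
    using integrable_weighted_square_diff_continuous[of "\<lambda>_. 1" g 1, OF _ _ _ _ cont] g_sq by simp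
  then have int_W: "integrable (lebesgue_on Omega) (\<lambda>x. W * (g x - p x)\<^sup>2)"
    by (rule integrable_mult_right)
  have int_w: "integrable (lebesgue_on Omega) (\<lambda>x. w x * (g x - p x)\<^sup>2)"
    using w_bounds int by (intro integrable_bounded_weight_mult[where W = W]) simp_all
  have "(\<integral>x. w x * (g x - p x)\<^sup>2 \<partial>lebesgue_on Omega) \<le> (\<integral>x. W * (g x - p x)\<^sup>2 \<partial>lebesgue_on Omega)"
  proof (rule integral_mono[OF int_w int_W])
    fix x assume "x \<in> space (lebesgue_on Omega)"
    then have "w x \<le> W" using w_bounds by simp
    then show "w x * (g x - p x)\<^sup>2 \<le> W * (g x - p x)\<^sup>2" by (rule mult_right_mono) simp
  qed
  also have "\<dots> = W * (\<integral>x. (g x - p x)\<^sup>2 \<partial>lebesgue_on Omega)"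
    by (rule integral_mult_right_zero)
  finally show ?thesis .
qed

lemma tendsto_integral_abs_diff_zero_on_Omega:
  fixes w g :: "real \<times> real \<Rightarrow> real" and p :: "nat \<Rightarrow> real \<times> real \<Rightarrow> real"
  assumes w_meas [measurable]: "w \<in> borel_measurable (lebesgue_on Omega)"
    and g_meas [measurable]: "g \<in> borel_measurable (lebesgue_on Omega)"
    and w_bounds: "\<forall>x\<in>Omega. 0 < w x \<and> w x \<le> W"
    and inv_int: "integrable (lebesgue_on Omega) (\<lambda>x. 1 / w x)"
    and g_sq: "integrable (lebesgue_on Omega) (\<lambda>x. w x * (g x)\<^sup>2)"
    and cont: "\<And>n. continuous_on UNIV (p n)"
    and lim: "(\<lambda>n. \<integral>x. w x * (g x - p n x)\<^sup>2 \<partial>lebesgue_on Omega) \<longlonglongrightarrow> 0"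
  shows "(\<lambda>n. \<integral>x. \<bar>g x - p n x\<bar> \<partial>lebesgue_on Omega) \<longlonglongrightarrow> 0"
proof (rule tendsto_integral_abs_zero_if_weighted_square[OF w_meas _ _ inv_int _ lim])
  have [measurable]: "p n \<in> borel_measurable (lebesgue_on Omega)" for n
    using cont by (rule measurable_on_Omega_if_continuous)
  show "(\<lambda>x. g x - p n x) \<in> borel_measurable (lebesgue_on Omega)" for n
    by measurable
  show "\<forall>x\<in>space (lebesgue_on Omega). 0 < w x"
    using w_bounds by simp
  have "\<forall>x\<in>Omega. 0 \<le> w x \<and> w x \<le> W"
    using w_bounds by (simp add: less_imp_le)
  then show "integrable (lebesgue_on Omega) (\<lambda>x. w x * (g x - p n x)\<^sup>2)" for n
    by (rule integrable_weighted_square_diff_continuous[OF w_meas g_meas _ g_sq cont])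
qed

lemma weight_bounded_on_Omega:
  fixes h :: "real \<Rightarrow> real"
  assumes "bounded (h ` {0..1})" and "\<forall>t\<in>{0<..1}. h t > 0"
  obtains M where "\<forall>x\<in>Omega. 0 < h (fst x) \<and> h (fst x) \<le> M"
proof -
  obtain M where M: "\<forall>y\<in>h ` {0..1}. norm y \<le> M"
    using assms(1) bounded_iff by blast
  have "0 < h (fst x) \<and> h (fst x) \<le> M" if "x \<in> Omega" for x
  proof -
    have t: "fst x \<in> {0<..1}" using fst_in_Omega[OF that] by simp
    then have "\<bar>h (fst x)\<bar> \<le> M" using M by auto
    moreover have "0 < h (fst x)" using t assms(2) by blast
    ultimately show ?thesis by simp
  qed
  then show ?thesis using that by blast
qed

lemma weight_measurable_on_Omega:
  fixes h :: "real \<Rightarrow> real"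
  assumes "continuous_on {0<..1} h"
  shows "(\<lambda>x. h (fst x)) \<in> borel_measurable (lebesgue_on Omega)"
proof (rule continuous_imp_measurable_on_sets_lebesgue)
  have "fst ` Omega \<subseteq> {0<..1}"
    unfolding Omega_def by auto
  then show "continuous_on Omega (\<lambda>x. h (fst x))"
    by (rule continuous_on_compose2[OF assms continuous_on_fst[OF continuous_on_id]])
qed simp

lemma integrable_inverse_weight_on_Omega:
  fixes h :: "real \<Rightarrow> real"
  assumes [measurable]: "(\<lambda>x. h (fst x)) \<in> borel_measurable (lebesgue_on Omega)"
    and "\<forall>x\<in>Omega. 0 < h (fst x)"
    and "(\<integral>\<^sup>+ y. indicator (ball (1/2, 1/2) (diameter Omega) \<inter> Omega) y * ennreal (1 / h (fst y))
          \<partial>lebesgue) < \<infinity>"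
  shows "integrable (lebesgue_on Omega) (\<lambda>x. 1 / h (fst x))"
proof (rule integrableI_nonneg)
  show "AE x in lebesgue_on Omega. 0 \<le> 1 / h (fst x)"
    using assms(2) by (intro AE_I2) (auto simp: less_imp_le)
  have "ball (1/2, 1/2) (diameter Omega) \<inter> Omega = Omega"
    using Omega_subset_ball_diameter by blast
  then show "(\<integral>\<^sup>+ x. 1 / h (fst x) \<partial>lebesgue_on Omega) < \<infinity>"
    using assms(3) by (simp add: nn_integral_restrict_space mult.commute)
qed simp

lemma Lp_on_2_sqrt_weightI:
  fixes h :: "real \<Rightarrow> real"
  assumes [measurable]: "(\<lambda>x. h (fst x)) \<in> borel_measurable (lebesgue_on Omega)"
    "g \<in> borel_measurable (lebesgue_on Omega)"
    and h_nonneg: "\<forall>x\<in>Omega. 0 \<le> h (fst x)"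
    and hg_sq: "integrable (lebesgue_on Omega) (\<lambda>x. h (fst x) * (g x)\<^sup>2)"
  shows "Lp_on 2 Omega (\<lambda>x. sqrt (h (fst x)) * g x)"
proof -
  have "\<forall>x\<in>Omega. (sqrt (h (fst x)) * g x)\<^sup>2 = h (fst x) * (g x)\<^sup>2"
    using h_nonneg by (simp add: power_mult_distrib)
  then show ?thesis
    unfolding Lp_on_2_Omega_iff using hg_sq
    by (subst Bochner_Integration.integrable_cong[OF refl, where g = "\<lambda>x. h (fst x) * (g x)\<^sup>2"]) auto
qed

lemma Lp_on_2_sqrt_weightD:
  fixes h :: "real \<Rightarrow> real"
  assumes [measurable]: "(\<lambda>x. h (fst x)) \<in> borel_measurable (lebesgue_on Omega)"
    and h_pos: "\<forall>x\<in>Omega. 0 < h (fst x)"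
    and "Lp_on 2 Omega (\<lambda>x. sqrt (h (fst x)) * g x)"
  shows "g \<in> borel_measurable (lebesgue_on Omega)"
    and "integrable (lebesgue_on Omega) (\<lambda>x. h (fst x) * (g x)\<^sup>2)"
proof -
  have "(\<lambda>x. sqrt (h (fst x)) * g x) \<in> borel_measurable (lebesgue_on Omega)"
    and sg_sq: "integrable (lebesgue_on Omega) (\<lambda>x. (sqrt (h (fst x)) * g x)\<^sup>2)"
    using assms(3) by (auto simp: Lp_on_2_Omega_iff)
  then have "(\<lambda>x. sqrt (h (fst x)) * g x / sqrt (h (fst x))) \<in> borel_measurable (lebesgue_on Omega)"
    by measurable
  then show "g \<in> borel_measurable (lebesgue_on Omega)"
    by (rule measurable_cong[THEN iffD1, rotated]) (use h_pos in force)
  show "integrable (lebesgue_on Omega) (\<lambda>x. h (fst x) * (g x)\<^sup>2)"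
    using sg_sq h_pos
    by (subst Bochner_Integration.integrable_cong[OF refl, where g = "\<lambda>x. (sqrt (h (fst x)) * g x)\<^sup>2"])
       (auto simp: power_mult_distrib less_imp_le)
qed

section \<open>The embeddings\<close>

lemma Hh1I:
  assumes "Lp_on 2 Omega u" "weak_pd 1 Omega u g1" "weak_pd 2 Omega u g2" "Lp_on 2 Omega g1"
    and "Lp_on 2 Omega (\<lambda>x. sqrt (h (fst x)) * g2 x)"
  shows "Hh1 h u"
  unfolding Hh1_def using assms by blast

lemma Hh10I:
  assumes "Hh1 h u" "weak_pd 1 Omega u g1" "weak_pd 2 Omega u g2" "Lp_on 2 Omega g1"
    and "Lp_on 2 Omega (\<lambda>x. sqrt (h (fst x)) * g2 x)" "\<forall>n. test_fun Omega (\<phi> n)"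
    and "(\<lambda>n. (\<integral>x. (u x - \<phi> n x)\<^sup>2 \<partial>lebesgue_on Omega)
        + (\<integral>x. (g1 x - pd1 (\<phi> n) x)\<^sup>2 \<partial>lebesgue_on Omega)
        + (\<integral>x. h (fst x) * (g2 x - pd2 (\<phi> n) x)\<^sup>2 \<partial>lebesgue_on Omega)) \<longlonglongrightarrow> 0"
  shows "Hh10 h u"
  unfolding Hh10_def set_integral_Omega using assms by fast

lemma Hh10E:
  assumes "Hh10 h u"
  obtains g1 g2 \<phi> where "Hh1 h u" "weak_pd 1 Omega u g1" "weak_pd 2 Omega u g2" "Lp_on 2 Omega g1"
    and "Lp_on 2 Omega (\<lambda>x. sqrt (h (fst x)) * g2 x)" "\<forall>n. test_fun Omega (\<phi> n)"
    and "(\<lambda>n. (\<integral>x. (u x - \<phi> n x)\<^sup>2 \<partial>lebesgue_on Omega)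
        + (\<integral>x. (g1 x - pd1 (\<phi> n) x)\<^sup>2 \<partial>lebesgue_on Omega)
        + (\<integral>x. h (fst x) * (g2 x - pd2 (\<phi> n) x)\<^sup>2 \<partial>lebesgue_on Omega)) \<longlonglongrightarrow> 0"
  using assms unfolding Hh10_def set_integral_Omega by blast

lemma W110I:
  assumes "Lp_on 1 Omega u" "weak_pd 1 Omega u g1" "weak_pd 2 Omega u g2"
    and "Lp_on 1 Omega g1" "Lp_on 1 Omega g2" "\<forall>n. test_fun Omega (\<phi> n)"
    and "(\<lambda>n. (\<integral>x. \<bar>u x - \<phi> n x\<bar> \<partial>lebesgue_on Omega)
        + (\<integral>x. \<bar>g1 x - pd1 (\<phi> n) x\<bar> \<partial>lebesgue_on Omega)
        + (\<integral>x. \<bar>g2 x - pd2 (\<phi> n) x\<bar> \<partial>lebesgue_on Omega)) \<longlonglongrightarrow> 0"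
  shows "W110 u"
  unfolding W110_def set_integral_Omega using assms by fast

lemma H10_imp_Hh10:
  fixes h :: "real \<Rightarrow> real"
  assumes h_meas [measurable]: "(\<lambda>x. h (fst x)) \<in> borel_measurable (lebesgue_on Omega)"
    and h_bounds: "\<forall>x\<in>Omega. 0 \<le> h (fst x) \<and> h (fst x) \<le> M"
    and "H10 u"
  shows "Hh10 h u"
proof -
  obtain g1 g2 \<phi> where H1: "Hh1 (\<lambda>_. 1) u" and w1: "weak_pd 1 Omega u g1"
    and w2: "weak_pd 2 Omega u g2" and L1: "Lp_on 2 Omega g1" and L2: "Lp_on 2 Omega g2"
    and tf: "\<forall>n. test_fun Omega (\<phi> n)"
    and lim: "(\<lambda>n. (\<integral>x. (u x - \<phi> n x)\<^sup>2 \<partial>lebesgue_on Omega)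
                 + (\<integral>x. (g1 x - pd1 (\<phi> n) x)\<^sup>2 \<partial>lebesgue_on Omega)
                 + (\<integral>x. (g2 x - pd2 (\<phi> n) x)\<^sup>2 \<partial>lebesgue_on Omega)) \<longlonglongrightarrow> 0"
    using \<open>H10 u\<close> by (auto simp: H10_def elim!: Hh10E)
  have h_nonneg: "\<forall>x\<in>Omega. 0 \<le> h (fst x)"
    using h_bounds by simp
  have g2_meas [measurable]: "g2 \<in> borel_measurable (lebesgue_on Omega)"
    and g2_sq: "integrable (lebesgue_on Omega) (\<lambda>x. (g2 x)\<^sup>2)"
    using L2 by (auto simp: Lp_on_2_Omega_iff)
  have "integrable (lebesgue_on Omega) (\<lambda>x. h (fst x) * (g2 x)\<^sup>2)"
    using h_bounds g2_sq by (intro integrable_bounded_weight_mult[where W = M]) auto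
  then have L2h: "Lp_on 2 Omega (\<lambda>x. sqrt (h (fst x)) * g2 x)"
    by (rule Lp_on_2_sqrt_weightI[OF h_meas g2_meas h_nonneg])
  have err_le: "(\<integral>x. h (fst x) * (g2 x - pd2 (\<phi> n) x)\<^sup>2 \<partial>lebesgue_on Omega)
      \<le> M * (\<integral>x. (g2 x - pd2 (\<phi> n) x)\<^sup>2 \<partial>lebesgue_on Omega)" for n
    using tf test_fun_continuous
    by (intro integral_weighted_square_diff_le[OF h_meas g2_meas h_bounds g2_sq]) blast
  have err_nonneg: "0 \<le> (\<integral>x. h (fst x) * (g2 x - pd2 (\<phi> n) x)\<^sup>2 \<partial>lebesgue_on Omega)" for n
    using h_nonneg by (intro integral_nonneg_AE AE_I2 mult_nonneg_nonneg) simp_all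
  have "(\<lambda>n. (\<integral>x. (u x - \<phi> n x)\<^sup>2 \<partial>lebesgue_on Omega)
      + (\<integral>x. (g1 x - pd1 (\<phi> n) x)\<^sup>2 \<partial>lebesgue_on Omega)
      + (\<integral>x. h (fst x) * (g2 x - pd2 (\<phi> n) x)\<^sup>2 \<partial>lebesgue_on Omega)) \<longlonglongrightarrow> 0"
    by (rule tendsto_zero_add_dominated[OF _ _ err_nonneg err_le lim]) auto
  moreover have "Lp_on 2 Omega u"
    using H1 by (simp add: Hh1_def)
  then have "Hh1 h u"
    using w1 w2 L1 L2h by (rule Hh1I)
  ultimately show ?thesis
    by (intro Hh10I[OF _ w1 w2 L1 L2h tf])
qed

lemma Hh10_imp_W110:
  fixes h :: "real \<Rightarrow> real"
  assumes h_meas [measurable]: "(\<lambda>x. h (fst x)) \<in> borel_measurable (lebesgue_on Omega)"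
    and h_bounds: "\<forall>x\<in>Omega. 0 < h (fst x) \<and> h (fst x) \<le> M"
    and inv_int: "integrable (lebesgue_on Omega) (\<lambda>x. 1 / h (fst x))"
    and "Hh10 h u"
  shows "W110 u"
proof -
  obtain g1 g2 \<phi> where H1: "Hh1 h u" and w1: "weak_pd 1 Omega u g1"
    and w2: "weak_pd 2 Omega u g2" and L1: "Lp_on 2 Omega g1"
    and L2: "Lp_on 2 Omega (\<lambda>x. sqrt (h (fst x)) * g2 x)"
    and tf: "\<forall>n. test_fun Omega (\<phi> n)"
    and lim: "(\<lambda>n. (\<integral>x. (u x - \<phi> n x)\<^sup>2 \<partial>lebesgue_on Omega)
                 + (\<integral>x. (g1 x - pd1 (\<phi> n) x)\<^sup>2 \<partial>lebesgue_on Omega)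
                 + (\<integral>x. h (fst x) * (g2 x - pd2 (\<phi> n) x)\<^sup>2 \<partial>lebesgue_on Omega)) \<longlonglongrightarrow> 0"
    using \<open>Hh10 h u\<close> by (rule Hh10E)
  have h_pos: "\<forall>x\<in>Omega. 0 < h (fst x)"
    using h_bounds by simp
  have [measurable]: "u \<in> borel_measurable (lebesgue_on Omega)"
    and u_sq: "integrable (lebesgue_on Omega) (\<lambda>x. (u x)\<^sup>2)"
    using H1 by (auto simp: Hh1_def Lp_on_2_Omega_iff)
  have [measurable]: "g1 \<in> borel_measurable (lebesgue_on Omega)"
    and g1_sq: "integrable (lebesgue_on Omega) (\<lambda>x. (g1 x)\<^sup>2)"
    using L1 by (auto simp: Lp_on_2_Omega_iff)
  note g2_meas = Lp_on_2_sqrt_weightD(1)[OF h_meas h_pos L2]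
    and hg2_sq = Lp_on_2_sqrt_weightD(2)[OF h_meas h_pos L2]
  have L1_u: "Lp_on 1 Omega u" and L1_g1: "Lp_on 1 Omega g1"
    using u_sq g1_sq by (simp_all add: Lp_on_1_Omega_iff Omega.square_integrable_imp_integrable)
  have L1_g2: "Lp_on 1 Omega g2"
    using weighted_Cauchy_Schwarz_integral(1)[OF h_meas g2_meas _ inv_int hg2_sq] h_pos
    by (simp add: Lp_on_1_Omega_iff integrable_abs_iff[OF g2_meas])
  have cont: "continuous_on UNIV (\<phi> n)" "continuous_on UNIV (pd1 (\<phi> n))"
    "continuous_on UNIV (pd2 (\<phi> n))" for n
    using tf test_fun_continuous by blast+
  have "0 \<le> (\<integral>x. h (fst x) * (g2 x - pd2 (\<phi> n) x)\<^sup>2 \<partial>lebesgue_on Omega)" for n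
    using h_pos by (intro integral_nonneg_AE AE_I2 mult_nonneg_nonneg) (simp_all add: less_imp_le)
  then have parts: "(\<lambda>n. \<integral>x. (u x - \<phi> n x)\<^sup>2 \<partial>lebesgue_on Omega) \<longlonglongrightarrow> 0"
    "(\<lambda>n. \<integral>x. (g1 x - pd1 (\<phi> n) x)\<^sup>2 \<partial>lebesgue_on Omega) \<longlonglongrightarrow> 0"
    "(\<lambda>n. \<integral>x. h (fst x) * (g2 x - pd2 (\<phi> n) x)\<^sup>2 \<partial>lebesgue_on Omega) \<longlonglongrightarrow> 0"
    using tendsto_zero_summands_nonneg[OF _ _ _ lim] by auto
  have "(\<lambda>n. \<integral>x. \<bar>u x - \<phi> n x\<bar> \<partial>lebesgue_on Omega) \<longlonglongrightarrow> 0"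
    using tendsto_integral_abs_diff_zero_on_Omega[of "\<lambda>_. 1" u 1 \<phi>] u_sq cont(1) parts(1) by simp
  moreover have "(\<lambda>n. \<integral>x. \<bar>g1 x - pd1 (\<phi> n) x\<bar> \<partial>lebesgue_on Omega) \<longlonglongrightarrow> 0"
    using tendsto_integral_abs_diff_zero_on_Omega[of "\<lambda>_. 1" g1 1 "\<lambda>n. pd1 (\<phi> n)"]
      g1_sq cont(2) parts(2)
    by simp
  moreover have "(\<lambda>n. \<integral>x. \<bar>g2 x - pd2 (\<phi> n) x\<bar> \<partial>lebesgue_on Omega) \<longlonglongrightarrow> 0"
    by (rule tendsto_integral_abs_diff_zero_on_Omega[OF h_meas g2_meas h_bounds inv_int hg2_sq
          cont(3) parts(3)])
  ultimately show ?thesis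
    by (intro W110I[OF L1_u w1 w2 L1_g1 L1_g2 tf] tendsto_add_zero)
qed

theorem lemma2p4:
  fixes h :: "real \<Rightarrow> real"
  assumes "bounded (h ` {0..1})"
    and "h 0 = 0"
    and "\<forall>t\<in>{0<..1}. h t > 0"
    and "\<exists>h'. (\<forall>t\<in>{0<..1}. (h has_real_derivative h' t) (at t within {0<..1}))
               \<and> continuous_on {0<..1} h'"
    and "\<exists>C \<theta>. C > 0 \<and> 0 < \<theta> \<and> \<theta> < 1 \<and>
           (\<forall>x\<in>Omega. \<forall>r. 0 < r \<and> r \<le> diameter Omega \<longrightarrow>
              (\<integral>\<^sup>+ y. indicator (ball x r \<inter> Omega) y * ennreal (1 / h (fst y)) \<partial>lebesgue)
                \<le> ennreal (C * measure lebesgue (ball x r \<inter> Omega) powr \<theta>))"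
  shows "{u. H10 u} \<subseteq> {u. Hh10 h u} \<and> {u. Hh10 h u} \<subseteq> {u. Hh1 h u} \<inter> {u. W110 u}"
proof -
  obtain M where h_bounds: "\<forall>x\<in>Omega. 0 < h (fst x) \<and> h (fst x) \<le> M"
    using weight_bounded_on_Omega[OF assms(1,3)] .
  have "continuous_on {0<..1} h"
    using assms(4) by (auto intro: DERIV_continuous_on)
  then have h_meas: "(\<lambda>x. h (fst x)) \<in> borel_measurable (lebesgue_on Omega)"
    by (rule weight_measurable_on_Omega)
  obtain C \<theta> where "\<forall>x\<in>Omega. \<forall>r. 0 < r \<and> r \<le> diameter Omega \<longrightarrow>
      (\<integral>\<^sup>+ y. indicator (ball x r \<inter> Omega) y * ennreal (1 / h (fst y)) \<partial>lebesgue)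
        \<le> ennreal (C * measure lebesgue (ball x r \<inter> Omega) powr \<theta>)"
    using assms(5) by blast
  then have "(\<integral>\<^sup>+ y. indicator (ball (1/2, 1/2) (diameter Omega) \<inter> Omega) y * ennreal (1 / h (fst y))
      \<partial>lebesgue) < \<infinity>"
    using centre_in_Omega diameter_Omega_pos by (force intro: le_less_trans[OF _ ennreal_less_top])
  then have inv_int: "integrable (lebesgue_on Omega) (\<lambda>x. 1 / h (fst x))"
    using h_bounds by (intro integrable_inverse_weight_on_Omega[OF h_meas]) simp_all
  have "\<forall>x\<in>Omega. 0 \<le> h (fst x) \<and> h (fst x) \<le> M"
    using h_bounds by (simp add: less_imp_le)
  then have "H10 u \<Longrightarrow> Hh10 h u" for u
    by (rule H10_imp_Hh10[OF h_meas])
  moreover have "Hh10 h u \<Longrightarrow> Hh1 h u" for u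
    by (simp add: Hh10_def)
  moreover have "Hh10 h u \<Longrightarrow> W110 u" for u
    by (rule Hh10_imp_W110[OF h_meas h_bounds inv_int])
  ultimately show ?thesis by blast
qed

end
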